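(* Let $p$ be a prime, $n\geq1$ an integer and $\alpha\in\mathbb{Z}_p$. Then $\mathfrak{M}_{p,\alpha}^n\cap\mathbb{Z}[X]=(p^n,X-a)$, where $a\in\mathbb{Z}$ is any integer with $\alpha\equiv a\pmod{p^n}$. This ideal is $(p,X-j)$-primary, where $j\in\{0,\dots,p-1\}$, $j\equiv\alpha\pmod p$. Moreover, for $\beta\in\mathbb{Z}_p$, $\mathfrak{M}_{p,\alpha}^n\cap\mathbb{Z}[X]=\mathfrak{M}_{p,\beta}^n\cap\mathbb{Z}[X]$ if and only if $\alpha\equiv\beta\pmod{p^n}$.
   Context: $\mathrm{Int}(\mathbb{Z})=\{f\in\mathbb{Q}[X] : f(\mathbb{Z})\subseteq\mathbb{Z}\}$; $\mathbb{Z}_p$ is the ring of $p$-adic integers; $\mathfrak{M}_{p,\alpha}=\{f\in\mathrm{Int}(\mathbb{Z}) : f(\alpha)\in p\mathbb{Z}_p\}$ and $\mathfrak{M}_{p,\alpha}^n$ is its $n$-th power as an ideal of $\mathrm{Int}(\mathbb{Z})$. It is known (Loper) that $\mathfrak{M}_{p,\alpha}^n=\{f\in\mathrm{Int}(\mathbb{Z}) : f(\alpha)\in p^n\mathbb{Z}_p\}$. *)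

theory Defs
  imports "HOL-Computational_Algebra.Polynomial" "HOL-Computational_Algebra.Primes"
begin

text \<open>p-adic integers, modelled as coherent sequences of residues:
  alpha k is the residue of alpha modulo p^k, in the range 0 ..< p^k.\<close>
definition padic_int :: "int \<Rightarrow> (nat \<Rightarrow> int) \<Rightarrow> bool" where
  "padic_int p \<alpha> \<longleftrightarrow> (\<forall>k. 0 \<le> \<alpha> k \<and> \<alpha> k < p ^ k) \<and> (\<forall>k. \<alpha> (Suc k) mod p ^ k = \<alpha> k)"

definition IntZ :: "rat poly set" where
  "IntZ = {f. \<forall>z::int. poly f (of_int z) \<in> \<int>}"

text \<open>Since integer-valued polynomials are p-adically
  continuous on Z and p^n Z_p is open and closed, this holds iff p^n divides f(alpha_k)
  for all sufficiently large k (alpha_k \<rightarrow> alpha).\<close>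
definition val_in_pn :: "int \<Rightarrow> nat \<Rightarrow> (nat \<Rightarrow> int) \<Rightarrow> rat poly \<Rightarrow> bool" where
  "val_in_pn p n \<alpha> f \<longleftrightarrow> (\<exists>K. \<forall>k\<ge>K. poly f (of_int (\<alpha> k)) / of_int (p ^ n) \<in> \<int>)"

text \<open>M_{p,alpha}^n = {f \<in> Int(Z). f(alpha) \<in> p^n Z_p} (Loper's description of the n-th power).\<close>
definition Mpow :: "int \<Rightarrow> (nat \<Rightarrow> int) \<Rightarrow> nat \<Rightarrow> rat poly set" where
  "Mpow p \<alpha> n = {f \<in> IntZ. val_in_pn p n \<alpha> f}"

definition MpowZ :: "int \<Rightarrow> (nat \<Rightarrow> int) \<Rightarrow> nat \<Rightarrow> int poly set" where
  "MpowZ p \<alpha> n = {g. map_poly of_int g \<in> Mpow p \<alpha> n}"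

definition ideal2 :: "int \<Rightarrow> int poly \<Rightarrow> int poly set" where
  "ideal2 c h = {g. \<exists>u v. g = smult c u + h * v}"

definition is_ideal :: "int poly set \<Rightarrow> bool" where
  "is_ideal I \<longleftrightarrow> 0 \<in> I \<and> (\<forall>f\<in>I. \<forall>g\<in>I. f + g \<in> I) \<and> (\<forall>f\<in>I. \<forall>r. r * f \<in> I)"

definition radical :: "int poly set \<Rightarrow> int poly set" where
  "radical I = {f. \<exists>m. f ^ m \<in> I}"

definition primary_ideal :: "int poly set \<Rightarrow> bool" where
  "primary_ideal I \<longleftrightarrow> is_ideal I \<and> I \<noteq> UNIV \<and>
     (\<forall>f g. f * g \<in> I \<longrightarrow> f \<in> I \<or> g \<in> radical I)"

definition primary_for :: "int poly set \<Rightarrow> int poly set \<Rightarrow> bool" where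
  "primary_for I P \<longleftrightarrow> primary_ideal I \<and> radical I = P"

end

theory Submission
  imports Defs
begin

text \<open>Since g(x) - g(y) is divisible by x - y, a polynomial g with integer coefficients has
  g(\<alpha>) \<equiv> g(a) (mod p^n) whenever \<alpha> \<equiv> a (mod p^n). Hence M_{p,\<alpha>}^n \<inter> Z[X] is the kernel of
  g \<mapsto> g(a) mod p^n, which by the factor theorem is (p^n, X - a). Two such kernels coincide iff
  the evaluation points agree modulo p^n, because X - a lies in the first. The kernel is primary
  since its quotient Z/p^n is a ring in which every zero divisor is nilpotent, and its radical is
  the kernel of evaluation modulo p.\<close>

lemma poly_map_poly_of_int:
  "poly (map_poly of_int p) (of_int x :: 'a::comm_ring_1) = of_int (poly p x)"
  by (induction p) (simp_all add: map_poly_pCons)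

lemma poly_diff_dvd: "x - y dvd poly p x - poly p (y::'a::comm_ring_1)"
proof -
  have "poly p x = (x - y) * poly (synthetic_div p y) x + poly p y"
    by (subst synthetic_div_correct'[of y p, symmetric]) (simp add: algebra_simps)
  then show ?thesis by simp
qed

lemma poly_mod_cong:
  fixes p :: "'a::euclidean_ring_cancel poly"
  assumes "x mod m = y mod m"
  shows "poly p x mod m = poly p y mod m"
  using assms poly_diff_dvd dvd_trans by (metis mod_eq_dvd_iff)

lemma padic_int_mod:
  assumes "padic_int p \<alpha>" "m \<le> k"
  shows "\<alpha> k mod p ^ m = \<alpha> m"
  using assms(2)
proof (induction k rule: dec_induct)
  case base
  then show ?case using assms(1) unfolding padic_int_def by simp
next
  case (step k)
  have "\<alpha> (Suc k) mod p ^ m = (\<alpha> (Suc k) mod p ^ k) mod p ^ m"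
    using step(1) by (simp add: le_imp_power_dvd mod_mod_cancel)
  also have "\<dots> = \<alpha> k mod p ^ m" using assms(1) unfolding padic_int_def by simp
  finally show ?case using step.IH by simp
qed

lemma ideal2_linear: "ideal2 c [:-a, 1:] = {g. c dvd poly g a}"
proof (intro set_eqI iffI)
  fix g assume "g \<in> ideal2 c [:-a, 1:]"
  then show "g \<in> {g. c dvd poly g a}" unfolding ideal2_def by auto
next
  fix g assume "g \<in> {g. c dvd poly g a}"
  then obtain k where k: "poly g a = c * k" by auto
  have "g = [:-a, 1:] * synthetic_div g a + [:poly g a:]"
    using synthetic_div_correct'[of a g] by simp
  also have "[:poly g a:] = smult c [:k:]" using k by simp
  finally have "g = smult c [:k:] + [:-a, 1:] * synthetic_div g a" by (simp add: add.commute)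
  then show "g \<in> ideal2 c [:-a, 1:]" unfolding ideal2_def by blast
qed

lemma ideal2_linear_eq_iff:
  "ideal2 c [:-a, 1:] = ideal2 c [:-b, 1:] \<longleftrightarrow> a mod c = b mod c"
proof
  assume eq: "ideal2 c [:-a, 1:] = ideal2 c [:-b, 1:]"
  have "[:-a, 1:] \<in> ideal2 c [:-a, 1:]" by (simp add: ideal2_linear)
  then have "c dvd b - a" unfolding eq by (simp add: ideal2_linear)
  then show "a mod c = b mod c" by (metis mod_eq_dvd_iff dvd_diff_commute)
next
  assume "a mod c = b mod c"
  then have "c dvd poly g a \<longleftrightarrow> c dvd poly g b" for g
    using poly_mod_cong[of a c b g] by (simp add: mod_eq_0_iff_dvd[symmetric])
  then show "ideal2 c [:-a, 1:] = ideal2 c [:-b, 1:]" by (simp add: ideal2_linear)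
qed

lemma MpowZ_eq_ideal2:
  assumes "p \<noteq> 0" "padic_int p \<alpha>"
  shows "MpowZ p \<alpha> n = ideal2 (p ^ n) [:-\<alpha> n, 1:]"
proof -
  have "p ^ n dvd poly g (\<alpha> k) \<longleftrightarrow> p ^ n dvd poly g (\<alpha> n)" if "n \<le> k" for g k
  proof -
    have "\<alpha> k mod p ^ n = \<alpha> n mod p ^ n"
      using padic_int_mod[OF assms(2)] that by simp
    from poly_mod_cong[OF this, of g] show ?thesis by (simp add: mod_eq_0_iff_dvd[symmetric])
  qed
  then have "(\<exists>K. \<forall>k\<ge>K. p ^ n dvd poly g (\<alpha> k)) \<longleftrightarrow> p ^ n dvd poly g (\<alpha> n)" for g
    by (meson max.cobounded1 max.cobounded2 order_refl)
  moreover have "(of_int x / of_int (p ^ n) :: rat) \<in> \<int> \<longleftrightarrow> p ^ n dvd x" for x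
    using assms(1) of_int_div_of_int_in_Ints_iff[of x "p ^ n", where 'a = rat] by simp
  ultimately have "val_in_pn p n \<alpha> (map_poly of_int g) \<longleftrightarrow> p ^ n dvd poly g (\<alpha> n)" for g
    by (simp only: val_in_pn_def poly_map_poly_of_int)
  moreover have "map_poly of_int g \<in> IntZ" for g
    unfolding IntZ_def by (simp add: poly_map_poly_of_int)
  ultimately show ?thesis
    unfolding MpowZ_def Mpow_def ideal2_linear by simp
qed

lemma radical_ideal2_prime_power:
  assumes "prime p" "n \<ge> 1"
  shows "radical (ideal2 (p ^ n) [:-a, 1:]) = ideal2 p [:-a, 1:]"
proof (intro set_eqI iffI)
  fix f assume "f \<in> radical (ideal2 (p ^ n) [:-a, 1:])"
  then obtain m where "p ^ n dvd poly f a ^ m"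
    unfolding radical_def ideal2_linear by auto
  moreover have "p dvd p ^ n"
    using assms(2) by (simp add: dvd_power)
  ultimately have "p dvd poly f a ^ m"
    by (rule dvd_trans[rotated])
  then show "f \<in> ideal2 p [:-a, 1:]"
    using assms(1) by (simp add: ideal2_linear prime_dvd_power)
next
  fix f assume "f \<in> ideal2 p [:-a, 1:]"
  then have "p ^ n dvd poly (f ^ n) a"
    by (simp add: ideal2_linear dvd_power_same)
  then show "f \<in> radical (ideal2 (p ^ n) [:-a, 1:])"
    unfolding radical_def ideal2_linear by blast
qed

lemma primary_ideal_ideal2_prime_power:
  assumes "prime p" "n \<ge> 1"
  shows "primary_ideal (ideal2 (p ^ n) [:-a, 1:])"
  unfolding primary_ideal_def
proof (intro conjI allI impI)
  show "is_ideal (ideal2 (p ^ n) [:-a, 1:])"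
    unfolding is_ideal_def ideal2_linear by auto
  have "\<not> p ^ n dvd 1"
    using assms is_unit_power_iff[of p n] not_prime_unit[of p] by fastforce
  then show "ideal2 (p ^ n) [:-a, 1:] \<noteq> UNIV"
    unfolding ideal2_linear by (metis UNIV_I mem_Collect_eq poly_1)
next
  fix f g assume fg: "f * g \<in> ideal2 (p ^ n) [:-a, 1:]"
  show "f \<in> ideal2 (p ^ n) [:-a, 1:] \<or> g \<in> radical (ideal2 (p ^ n) [:-a, 1:])"
  proof (cases "p dvd poly g a")
    case True
    then show ?thesis
      using radical_ideal2_prime_power[OF assms] by (simp add: ideal2_linear)
  next
    case False
    then have "coprime (p ^ n) (poly g a)"
      using assms(1) by (simp add: prime_imp_coprime)
    then show ?thesis
      using fg by (simp add: ideal2_linear coprime_dvd_mult_left_iff)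
  qed
qed

theorem mainTheorem7:
  fixes p :: int and n :: nat and \<alpha> :: "nat \<Rightarrow> int"
  assumes "prime p" and "n \<ge> 1" and "padic_int p \<alpha>"
  shows "(\<forall>a::int. a mod p ^ n = \<alpha> n \<longrightarrow> MpowZ p \<alpha> n = ideal2 (p ^ n) [:-a, 1:])
       \<and> (\<forall>j::int. 0 \<le> j \<and> j < p \<and> j mod p = \<alpha> 1 \<longrightarrow>
             primary_for (MpowZ p \<alpha> n) (ideal2 p [:-j, 1:]))
       \<and> (\<forall>\<beta>. padic_int p \<beta> \<longrightarrow> (MpowZ p \<alpha> n = MpowZ p \<beta> n \<longleftrightarrow> \<alpha> n = \<beta> n))"
proof -
  have p0: "p \<noteq> 0" using assms(1) by auto
  have residue: "\<beta> n mod p ^ n = \<beta> n" if "padic_int p \<beta>" for \<beta>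
    using padic_int_mod[OF that order_refl] .
  note M = MpowZ_eq_ideal2[OF p0]
  show ?thesis
  proof (intro conjI allI impI)
    fix a assume "a mod p ^ n = \<alpha> n"
    then show "MpowZ p \<alpha> n = ideal2 (p ^ n) [:-a, 1:]"
      using M[OF assms(3)] residue[OF assms(3)] by (simp add: ideal2_linear_eq_iff)
  next
    fix j assume "0 \<le> j \<and> j < p \<and> j mod p = \<alpha> 1"
    moreover have "\<alpha> n mod p = \<alpha> 1"
      using padic_int_mod[OF assms(3,2)] by simp
    ultimately have "ideal2 p [:-\<alpha> n, 1:] = ideal2 p [:-j, 1:]"
      by (simp add: ideal2_linear_eq_iff)
    then show "primary_for (MpowZ p \<alpha> n) (ideal2 p [:-j, 1:])"
      unfolding primary_for_def M[OF assms(3)]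
      using primary_ideal_ideal2_prime_power radical_ideal2_prime_power assms(1,2) by auto
  next
    fix \<beta> assume "padic_int p \<beta>"
    then show "MpowZ p \<alpha> n = MpowZ p \<beta> n \<longleftrightarrow> \<alpha> n = \<beta> n"
      using M residue assms(3) by (metis ideal2_linear_eq_iff)
  qed
qed

end
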